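(* Let $\mathcal{B}$ be a complete topological ring and let $\mathrm{e}=\sum_{i\in\mathbb{N}}\mathrm{e}_iT^i\colon\mathcal{B}\to\mathcal{B}\{T\}$ be a restricted exponential homomorphism. Then: (a) $\mathcal{B}^{\mathrm{e}}$ is a complete topological subring of $\mathcal{B}$. (b) For every $i\ge1$, $\mathrm{e}_i\colon\mathcal{B}\to\mathcal{B}$ is a homomorphism of topological $\mathcal{B}^{\mathrm{e}}$-modules. (c) If $\mathcal{B}$ admits a fundamental system $(\mathfrak{b}_n)_{n\in\mathbb{N}}$ of open ideals consisting of prime ideals of $\mathcal{B}$, then $\mathcal{B}^{\mathrm{e}}$ is factorially closed in $\mathcal{B}$; in particular every invertible element of $\mathcal{B}$ is contained in $\mathcal{B}^{\mathrm{e}}$.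
   Context: Conventions: topological rings are linearly topologized with a countable fundamental system of open ideals; homomorphisms are continuous; complete means the canonical map to $\varprojlim_{\mathfrak{a}}\mathcal{B}/\mathfrak{a}$ (open ideals, discrete quotients) is a topological isomorphism. $\mathcal{B}\{T\}$, $\mathcal{B}\{T,T'\}$ denote restricted power series over $\mathcal{B}$ (coefficients converging to $0$), topologized by the ideals of series with all coefficients in a given open ideal. A restricted exponential homomorphism is a continuous ring homomorphism $\mathrm{e}\colon\mathcal{B}\to\mathcal{B}\{T\}$, $\mathrm{e}(b)=\sum_i\mathrm{e}_i(b)T^i$, with $\mathrm{e}_0=\mathrm{id}_{\mathcal{B}}$ and $\sum_{i,j}\mathrm{e}_j(\mathrm{e}_i(b))T'^jT^i=\sum_\ell\mathrm{e}_\ell(b)(T+T')^\ell$ for all $b$. Its ring of invariants is $\mathcal{B}^{\mathrm{e}}=\{b\in\mathcal{B}:\mathrm{e}(b)=b\}$ (i.e. $b$ equals its image as a constant series), with the induced topology. A subring $R\subseteq\mathcal{B}$ is factorially closed if $b,b'\in\mathcal{B}$ and $bb'\in R\setminus\{0\}$ imply $b,b'\in R$. *)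

theory Defs
  imports Main
begin

text \<open>A ring is modelled as a carrier set
  S inside a type of class comm_ring_1 (S = UNIV for the ambient ring B; S = B^e for
  the subring of invariants).  A topology is given by a countable fundamental
  system of open ideals I :: nat => 'a set.\<close>

definition lt_ideal :: "'a::comm_ring_1 set \<Rightarrow> 'a set \<Rightarrow> bool" where
  "lt_ideal S a \<longleftrightarrow> a \<subseteq> S \<and> 0 \<in> a \<and>
     (\<forall>x\<in>a. \<forall>y\<in>a. x + y \<in> a \<and> x - y \<in> a) \<and>
     (\<forall>s\<in>S. \<forall>x\<in>a. s * x \<in> a)"

definition lt_prime_ideal :: "'a::comm_ring_1 set \<Rightarrow> 'a set \<Rightarrow> bool" where
  "lt_prime_ideal S p \<longleftrightarrow> lt_ideal S p \<and> 1 \<notin> p \<and>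
     (\<forall>x\<in>S. \<forall>y\<in>S. x * y \<in> p \<longrightarrow> x \<in> p \<or> y \<in> p)"

definition fundamental_system :: "'a::comm_ring_1 set \<Rightarrow> (nat \<Rightarrow> 'a set) \<Rightarrow> bool" where
  "fundamental_system S I \<longleftrightarrow> (\<forall>n. lt_ideal S (I n)) \<and>
     (\<forall>n m. \<exists>k. I k \<subseteq> I n \<inter> I m)"

definition open_ideal :: "'a::comm_ring_1 set \<Rightarrow> (nat \<Rightarrow> 'a set) \<Rightarrow> 'a set \<Rightarrow> bool" where
  "open_ideal S I a \<longleftrightarrow> lt_ideal S a \<and> (\<exists>n. I n \<subseteq> a)"

text \<open>Completeness: the canonical map S -> lim_{a open} S/a is a (topological)
  isomorphism, i.e. it is injective (the open ideals intersect to 0) and every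
  compatible family (x_a)_a of residues has a preimage.  (Bijectivity already gives
  a topological isomorphism for the limit topology.)\<close>
definition lt_complete :: "'a::comm_ring_1 set \<Rightarrow> (nat \<Rightarrow> 'a set) \<Rightarrow> bool" where
  "lt_complete S I \<longleftrightarrow>
     (\<Inter>n. I n) = {0} \<and>
     (\<forall>x :: 'a set \<Rightarrow> 'a.
        (\<forall>a. open_ideal S I a \<longrightarrow> x a \<in> S) \<and>
        (\<forall>a b. open_ideal S I a \<and> open_ideal S I b \<and> a \<subseteq> b \<longrightarrow> x a - x b \<in> b)
        \<longrightarrow> (\<exists>y\<in>S. \<forall>a. open_ideal S I a \<longrightarrow> y - x a \<in> a))"

text \<open>Restricted exponential homomorphism on the ring UNIV::'a set with topology I,
  given by its coefficient maps e i = e_i.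
  Conditions: each e(b) is a restricted power series (coefficients tend to 0);
  e is a ring homomorphism B -> B{T}; e is continuous for the topology of B{T}
  (ideals of series with all coefficients in a given open ideal); e_0 = id;
  and the exponential identity, compared coefficientwise at T'^j T^i:
  e_j(e_i(b)) = binom(i+j,i) e_{i+j}(b).\<close>
definition restricted_exp :: "(nat \<Rightarrow> 'a::comm_ring_1 set) \<Rightarrow> (nat \<Rightarrow> 'a \<Rightarrow> 'a) \<Rightarrow> bool" where
  "restricted_exp I e \<longleftrightarrow>
     (\<forall>b n. \<exists>N. \<forall>i\<ge>N. e i b \<in> I n) \<and>
     (\<forall>i x y. e i (x + y) = e i x + e i y) \<and>
     (\<forall>k x y. e k (x * y) = (\<Sum>i\<le>k. e i x * e (k - i) y)) \<and>
     (\<forall>i. e i 1 = (if i = 0 then 1 else 0)) \<and>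
     (\<forall>n. \<exists>m. \<forall>b\<in>I m. \<forall>i. e i b \<in> I n) \<and>
     (\<forall>b. e 0 b = b) \<and>
     (\<forall>i j b. e j (e i b) = of_nat ((i + j) choose i) * e (i + j) b)"

definition invariants :: "(nat \<Rightarrow> 'a::comm_ring_1 \<Rightarrow> 'a) \<Rightarrow> 'a set" where
  "invariants e = {b. \<forall>i. e i b = (if i = 0 then b else 0)}"

definition is_subring :: "'a::comm_ring_1 set \<Rightarrow> bool" where
  "is_subring R \<longleftrightarrow> 0 \<in> R \<and> 1 \<in> R \<and>
     (\<forall>x\<in>R. \<forall>y\<in>R. x + y \<in> R \<and> x - y \<in> R \<and> x * y \<in> R)"

definition factorially_closed :: "'a::comm_ring_1 set \<Rightarrow> bool" where
  "factorially_closed R \<longleftrightarrow> (\<forall>b b'. b * b' \<in> R - {0} \<longrightarrow> b \<in> R \<and> b' \<in> R)"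

end

theory Submission
  imports Defs
begin

text \<open>Since e is a ring homomorphism with e_0 = id, an element b is invariant iff
  e_i b = 0 for all i \<ge> 1; Leibniz' rule then shows that the e_i are linear over the
  invariants and that these form a subring.  By continuity of the e_i and separatedness
  this subring is closed, hence complete.  For factorial closedness, let the product b b' be a
  nonzero invariant and P an open prime ideal not containing it.  Modulo P the series
  e(b) and e(b') become polynomials over the domain B/P whose product is the constant
  b b'; comparing leading terms shows that both are constant, i.e. e_i b \<in> P for i \<ge> 1.
  As the open primes form a fundamental system, e_i b lies in every open ideal, so it
  vanishes.\<close>

lemma lt_ideal_sum:
  assumes "lt_ideal S a" "finite A" "\<And>x. x \<in> A \<Longrightarrow> h x \<in> a"
  shows "sum h A \<in> a"
  using assms(2,3)
proof (induction A rule: finite_induct)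
  case empty
  then show ?case using assms(1) by (simp add: lt_ideal_def)
next
  case (insert x F)
  then show ?case using assms(1) by (simp add: lt_ideal_def)
qed

lemma lt_ideal_Int_subring:
  assumes "lt_ideal S a" "is_subring R" "R \<subseteq> S"
  shows "lt_ideal R (a \<inter> R)"
  using assms unfolding lt_ideal_def is_subring_def by blast

lemma fundamental_system_Int_subring:
  assumes "fundamental_system S I" "is_subring R" "R \<subseteq> S"
  shows "fundamental_system R (\<lambda>n. I n \<inter> R)"
  using assms lt_ideal_Int_subring unfolding fundamental_system_def by blast

definition lt_closed :: "(nat \<Rightarrow> 'a::comm_ring_1 set) \<Rightarrow> 'a set \<Rightarrow> bool" where
  "lt_closed I R \<longleftrightarrow> (\<forall>y. (\<forall>n. \<exists>r\<in>R. y - r \<in> I n) \<longrightarrow> y \<in> R)"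

lemma lt_complete_closed_subring:
  assumes top: "fundamental_system S I" and compl: "lt_complete S I"
    and R: "is_subring R" "R \<subseteq> S" and closed: "lt_closed I R"
  shows "lt_complete R (\<lambda>n. I n \<inter> R)"
  unfolding lt_complete_def
proof (intro conjI allI impI)
  show "(\<Inter>n. I n \<inter> R) = {0}"
    using compl R(1) by (auto simp: lt_complete_def is_subring_def)
next
  let ?IR = "\<lambda>n. I n \<inter> R"
  fix x :: "'a set \<Rightarrow> 'a"
  assume "(\<forall>a. open_ideal R ?IR a \<longrightarrow> x a \<in> R) \<and>
    (\<forall>a b. open_ideal R ?IR a \<and> open_ideal R ?IR b \<and> a \<subseteq> b \<longrightarrow> x a - x b \<in> b)"
  then have x_in: "\<And>a. open_ideal R ?IR a \<Longrightarrow> x a \<in> R"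
    and x_compat: "\<And>a b. open_ideal R ?IR a \<Longrightarrow> open_ideal R ?IR b \<Longrightarrow> a \<subseteq> b \<Longrightarrow> x a - x b \<in> b"
    by blast+
  have open_Int: "open_ideal R ?IR (a \<inter> R)" if "open_ideal S I a" for a
    using that lt_ideal_Int_subring[OF _ R] unfolding open_ideal_def by blast
  have open_I: "open_ideal S I (I n)" for n
    using top unfolding open_ideal_def fundamental_system_def by blast
  have "\<exists>y\<in>S. \<forall>a. open_ideal S I a \<longrightarrow> y - x (a \<inter> R) \<in> a"
  proof (rule compl[unfolded lt_complete_def, THEN conjunct2, rule_format], intro conjI allI impI)
    fix a assume "open_ideal S I a"
    then show "x (a \<inter> R) \<in> S" using x_in open_Int R(2) by blast
  next
    fix a b assume "open_ideal S I a \<and> open_ideal S I b \<and> a \<subseteq> b"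
    then show "x (a \<inter> R) - x (b \<inter> R) \<in> b" using x_compat open_Int by blast
  qed
  then obtain y where y: "\<And>a. open_ideal S I a \<Longrightarrow> y - x (a \<inter> R) \<in> a" by blast
  have x_I: "x (I n \<inter> R) \<in> R" and y_I: "y - x (I n \<inter> R) \<in> I n" for n
    using x_in open_Int y open_I by blast+
  then have "y \<in> R" using closed unfolding lt_closed_def by blast
  moreover have "y - x a \<in> a" if a: "open_ideal R ?IR a" for a
  proof -
    obtain n where n: "I n \<inter> R \<subseteq> a" and ideal_a: "lt_ideal R a"
      using a unfolding open_ideal_def by blast
    have "y - x (I n \<inter> R) \<in> a"
      using \<open>y \<in> R\<close> x_I y_I R(1) n unfolding is_subring_def by blast
    moreover have "x (I n \<inter> R) - x a \<in> a"
      using x_compat[OF open_Int[OF open_I] a n] .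
    ultimately have "(y - x (I n \<inter> R)) + (x (I n \<inter> R) - x a) \<in> a"
      using ideal_a unfolding lt_ideal_def by blast
    then show ?thesis by simp
  qed
  ultimately show "\<exists>y\<in>R. \<forall>a. open_ideal R ?IR a \<longrightarrow> y - x a \<in> a" by blast
qed

text \<open>The two sequences are polynomials over the domain B/P; their top nonzero
  coefficients modulo P multiply to the coefficient of their product in the top degree.\<close>
lemma convolution_in_prime_ideal_imp_constant:
  fixes f g :: "nat \<Rightarrow> 'a::comm_ring_1"
  assumes P: "lt_prime_ideal UNIV P"
    and fin_f: "finite {i. f i \<notin> P}" and fin_g: "finite {i. g i \<notin> P}"
    and conv: "\<And>k. k \<ge> 1 \<Longrightarrow> (\<Sum>l\<le>k. f l * g (k - l)) \<in> P"
    and const: "f 0 * g 0 \<notin> P" and "i \<ge> 1"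
  shows "f i \<in> P"
proof (rule ccontr)
  assume "f i \<notin> P"
  have ideal: "lt_ideal UNIV P" using P by (simp add: lt_prime_ideal_def)
  have mult_P: "x * y \<in> P" if "x \<in> P \<or> y \<in> P" for x y
    using ideal that unfolding lt_ideal_def by (metis UNIV_I mult.commute)
  define df where "df = Max {i. f i \<notin> P}"
  define dg where "dg = Max {i. g i \<notin> P}"
  have "g 0 \<notin> P" using const mult_P by blast
  then have f_df: "f df \<notin> P" and g_dg: "g dg \<notin> P"
    using fin_f fin_g \<open>f i \<notin> P\<close> Max_in[of "{i. f i \<notin> P}"] Max_in[of "{i. g i \<notin> P}"]
    unfolding df_def dg_def by auto
  have "i \<le> df" unfolding df_def using fin_f \<open>f i \<notin> P\<close> by (auto intro: Max_ge)
  have f_above: "f l \<in> P" if "l > df" for l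
    using that Max_ge[OF fin_f] unfolding df_def by (metis mem_Collect_eq not_le)
  have g_above: "g l \<in> P" if "l > dg" for l
    using that Max_ge[OF fin_g] unfolding dg_def by (metis mem_Collect_eq not_le)
  define k where "k = df + dg"
  have rest: "(\<Sum>l\<in>{..k} - {df}. f l * g (k - l)) \<in> P"
  proof (rule lt_ideal_sum[OF ideal])
    fix l assume "l \<in> {..k} - {df}"
    then have "l > df \<or> k - l > dg" unfolding k_def by auto
    then show "f l * g (k - l) \<in> P" using f_above g_above mult_P by blast
  qed simp
  have "(\<Sum>l\<le>k. f l * g (k - l)) = f df * g dg + (\<Sum>l\<in>{..k} - {df}. f l * g (k - l))"
    by (subst sum.remove[of _ df]) (auto simp: k_def)
  then have "f df * g dg = (\<Sum>l\<le>k. f l * g (k - l)) - (\<Sum>l\<in>{..k} - {df}. f l * g (k - l))"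
    by simp
  moreover have "(\<Sum>l\<le>k. f l * g (k - l)) \<in> P"
    using conv \<open>i \<ge> 1\<close> \<open>i \<le> df\<close> by (simp add: k_def)
  ultimately have "f df * g dg \<in> P"
    using ideal rest unfolding lt_ideal_def by simp
  then show False using P f_df g_dg unfolding lt_prime_ideal_def by blast
qed

lemma factorially_closed_unit:
  assumes "factorially_closed R" "0 \<in> R" "1 \<in> R" "u * v = 1"
  shows "u \<in> R"
proof (cases "(1::'a) = 0")
  case True
  then have "u = 0" by (metis mult_1 mult_zero_left)
  then show ?thesis using assms(2) by simp
next
  case False
  then have "u * v \<in> R - {0}" using assms(3,4) by simp
  then show ?thesis using assms(1) unfolding factorially_closed_def by blast
qed

locale restricted_exponential =
  fixes I :: "nat \<Rightarrow> 'a::comm_ring_1 set" and e :: "nat \<Rightarrow> 'a \<Rightarrow> 'a"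
  assumes exp_hom: "restricted_exp I e"
begin

lemma e_coeffs_tendsto_zero: "\<exists>N. \<forall>i\<ge>N. e i b \<in> I n"
  and e_add: "e i (x + y) = e i x + e i y"
  and e_mult: "e k (x * y) = (\<Sum>i\<le>k. e i x * e (k - i) y)"
  and e_one: "e i 1 = (if i = 0 then 1 else 0)"
  and e_continuous: "\<exists>m. \<forall>b\<in>I m. \<forall>i. e i b \<in> I n"
  and e_0: "e 0 b = b"
  using exp_hom unfolding restricted_exp_def by blast+

lemma e_zero: "e i 0 = 0"
  using e_add[of i 0 0] by simp

lemma e_diff: "e i (x - y) = e i x - e i y"
  by (metis e_add eq_diff_eq)

lemma invariants_iff: "b \<in> invariants e \<longleftrightarrow> (\<forall>i\<ge>1. e i b = 0)"
  by (auto simp: invariants_def e_0)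

lemma e_mult_invariant:
  assumes "r \<in> invariants e"
  shows "e i (r * x) = r * e i x"
proof -
  have "e i (r * x) = (\<Sum>j\<in>{0}. e j r * e (i - j) x)"
    unfolding e_mult using assms by (intro sum.mono_neutral_right) (auto simp: invariants_iff)
  then show ?thesis by (simp add: e_0)
qed

lemma subring_invariants: "is_subring (invariants e)"
  unfolding is_subring_def invariants_iff
  by (simp add: e_zero e_one e_add e_diff e_mult_invariant invariants_iff)

lemma closed_invariants:
  assumes separated: "(\<Inter>n. I n) = {0}"
  shows "lt_closed I (invariants e)"
  unfolding lt_closed_def
proof (intro allI impI)
  fix y assume approx: "\<forall>n. \<exists>r\<in>invariants e. y - r \<in> I n"
  have "e i y \<in> I n" if "i \<ge> 1" for i n
  proof -
    obtain m where m: "\<forall>b\<in>I m. \<forall>i. e i b \<in> I n" using e_continuous by blast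
    obtain r where "r \<in> invariants e" "y - r \<in> I m" using approx by blast
    then show ?thesis using m \<open>i \<ge> 1\<close> by (metis e_diff invariants_iff diff_zero)
  qed
  then show "y \<in> invariants e" using separated by (auto simp: invariants_iff)
qed

lemma e_coeff_in_open_prime:
  assumes P: "lt_prime_ideal UNIV P" "open_ideal UNIV I P"
    and c: "b * b' \<in> invariants e" "b * b' \<notin> P" and "i \<ge> 1"
  shows "e i b \<in> P"
proof -
  obtain m where m: "I m \<subseteq> P" using P(2) unfolding open_ideal_def by blast
  have fin: "finite {i. e i z \<notin> P}" for z
  proof -
    obtain N where "\<forall>i\<ge>N. e i z \<in> I m" using e_coeffs_tendsto_zero by blast
    then have "{i. e i z \<notin> P} \<subseteq> {..<N}" using m by (auto simp: not_less[symmetric])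
    then show ?thesis using finite_subset by blast
  qed
  have "(\<Sum>l\<le>k. e l b * e (k - l) b') \<in> P" if "k \<ge> 1" for k
    using c(1) that P(1) e_mult[of k b b']
    by (simp add: invariants_iff lt_prime_ideal_def lt_ideal_def)
  moreover have "e 0 b * e 0 b' \<notin> P" using c(2) by (simp add: e_0)
  ultimately show ?thesis
    using convolution_in_prime_ideal_imp_constant[OF P(1) fin[of b] fin[of b']] \<open>i \<ge> 1\<close>
    by blast
qed

lemma factorially_closed_invariants:
  assumes top: "fundamental_system UNIV I" and separated: "(\<Inter>n. I n) = {0}"
    and primes: "\<And>n. lt_prime_ideal UNIV (J n) \<and> open_ideal UNIV I (J n)"
    and cofinal: "\<And>a. open_ideal UNIV I a \<Longrightarrow> \<exists>n. J n \<subseteq> a"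
  shows "factorially_closed (invariants e)"
proof -
  have left_factor: "b \<in> invariants e" if c: "b * b' \<in> invariants e - {0}" for b b'
    unfolding invariants_iff
  proof (intro allI impI)
    fix i :: nat assume "i \<ge> 1"
    obtain k0 where k0: "b * b' \<notin> I k0" using c separated by blast
    have "e i b \<in> I k" for k
    proof -
      obtain k' where k': "I k' \<subseteq> I k \<inter> I k0"
        using top unfolding fundamental_system_def by blast
      moreover have "open_ideal UNIV I (I k')"
        using top unfolding open_ideal_def fundamental_system_def by blast
      ultimately obtain n where n: "J n \<subseteq> I k \<inter> I k0" using cofinal by blast
      then have "e i b \<in> J n"
        using e_coeff_in_open_prime primes c k0 \<open>i \<ge> 1\<close> by blast
      then show ?thesis using n by blast
    qed
    then show "e i b = 0" using separated by blast
  qed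
  show ?thesis
    unfolding factorially_closed_def using left_factor by (metis mult.commute)
qed

end

theorem proposition2p3:
  fixes I :: "nat \<Rightarrow> 'a::comm_ring_1 set" and e :: "nat \<Rightarrow> 'a \<Rightarrow> 'a"
  assumes top: "fundamental_system UNIV I"
    and compl: "lt_complete UNIV I"
    and exp: "restricted_exp I e"
  shows
    "(is_subring (invariants e) \<and>
      fundamental_system (invariants e) (\<lambda>n. I n \<inter> invariants e) \<and>
      lt_complete (invariants e) (\<lambda>n. I n \<inter> invariants e))
   \<and> (\<forall>i\<ge>1.
        (\<forall>x y. e i (x + y) = e i x + e i y) \<and>
        (\<forall>r\<in>invariants e. \<forall>x. e i (r * x) = r * e i x) \<and>
        (\<forall>n. \<exists>m. \<forall>b\<in>I m. e i b \<in> I n))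
   \<and> ((\<exists>J :: nat \<Rightarrow> 'a set. (\<forall>n. lt_prime_ideal UNIV (J n) \<and> open_ideal UNIV I (J n)) \<and>
          (\<forall>a. open_ideal UNIV I a \<longrightarrow> (\<exists>n. J n \<subseteq> a)))
       \<longrightarrow> factorially_closed (invariants e) \<and>
           (\<forall>u. (\<exists>v. u * v = 1) \<longrightarrow> u \<in> invariants e))"
proof -
  interpret restricted_exponential I e using exp by unfold_locales
  have separated: "(\<Inter>n. I n) = {0}" using compl by (simp add: lt_complete_def)
  have R: "is_subring (invariants e)" "invariants e \<subseteq> UNIV"
    using subring_invariants by auto
  have part_a: "fundamental_system (invariants e) (\<lambda>n. I n \<inter> invariants e)"
    "lt_complete (invariants e) (\<lambda>n. I n \<inter> invariants e)"
    using fundamental_system_Int_subring[OF top R]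
      lt_complete_closed_subring[OF top compl R closed_invariants[OF separated]] by auto
  have part_b: "\<exists>m. \<forall>b\<in>I m. e i b \<in> I n" for i n
    using e_continuous by blast
  have part_c: "factorially_closed (invariants e) \<and> (\<forall>u. (\<exists>v. u * v = 1) \<longrightarrow> u \<in> invariants e)"
    if "\<exists>J :: nat \<Rightarrow> 'a set. (\<forall>n. lt_prime_ideal UNIV (J n) \<and> open_ideal UNIV I (J n)) \<and>
      (\<forall>a. open_ideal UNIV I a \<longrightarrow> (\<exists>n. J n \<subseteq> a))"
  proof -
    have "factorially_closed (invariants e)"
      using factorially_closed_invariants[OF top separated] that by blast
    then show ?thesis
      using R(1) factorially_closed_unit unfolding is_subring_def by blast
  qed
  show ?thesis
    using R(1) part_a part_b part_c e_add e_mult_invariant by (intro conjI) blast+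
qed

end
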